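(* Let $n\ge1$ and let $\alpha=(\alpha_1,\dots,\alpha_k)$ be a composition of $n$ (positive integers summing to $n$), and work over the alphabet $A=\{a_1<a_2<\dots<a_k\}$. Then $$|\{w\in\mathcal{W}^o_n:\operatorname{wt}(w)=x_1^{\alpha_1}\cdots x_k^{\alpha_k}\}|=|\{w\in\mathcal{W}^e_n:\operatorname{wt}(w)=x_1^{\alpha_1}\cdots x_k^{\alpha_k}\}|.$$
   Context: Words are finite sequences of letters from the totally ordered alphabet $A=\{a_1<\dots<a_k\}$; $\mathcal{W}_n$ is the set of words of length $n$. Words are compared in lexicographic order (a proper prefix is smaller than the word). Two words $u,v$ are conjugate if $u=rs$ and $v=sr$ for some words $r,s$. A nonempty word is primitive if it is not of the form $r^j$ with $j\ge2$. A Lyndon word is a primitive word strictly smaller than all its other conjugates (equivalently, a nonempty word strictly smaller than each of its proper nonempty suffixes). Every word $w$ has a unique Lyndon factorization $w=\ell_1\ell_2\cdots\ell_m$ with each $\ell_i$ a Lyndon word and $\ell_1\ge\ell_2\ge\dots\ge\ell_m$; the $\ell_i$ are the Lyndon factors of $w$. The weight of a word is $\operatorname{wt}(w)=x_1^{\beta_1}\cdots x_k^{\beta_k}$ where $\beta_i$ is the number of occurrences of $a_i$ in $w$. $\mathcal{W}^o_n$ is the set of words in $\mathcal{W}_n$ all of whose Lyndon factors have odd length and are pairwise distinct. $\mathcal{W}^e_n$ is the set of words in $\mathcal{W}_n$ all of whose Lyndon factors have even length, except possibly for one factor of length one. *)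

theory Defs
  imports Main
begin

text \<open>Letters a_1 < ... < a_k are encoded as natural numbers 0 < ... < k-1;
  words are lists of naturals.\<close>

definition lex_less :: "nat list \<Rightarrow> nat list \<Rightarrow> bool" where
  "lex_less u v \<longleftrightarrow> (u, v) \<in> lexord {(a, b). a < b}"

definition lex_le :: "nat list \<Rightarrow> nat list \<Rightarrow> bool" where
  "lex_le u v \<longleftrightarrow> u = v \<or> lex_less u v"

definition lyndon :: "nat list \<Rightarrow> bool" where
  "lyndon w \<longleftrightarrow> w \<noteq> [] \<and> (\<forall>i. 0 < i \<and> i < length w \<longrightarrow> lex_less w (drop i w))"

definition is_lyndon_factorization :: "nat list list \<Rightarrow> nat list \<Rightarrow> bool" where
  "is_lyndon_factorization ls w \<longleftrightarrow>
     concat ls = w \<and> (\<forall>l\<in>set ls. lyndon l) \<and> sorted_wrt (\<lambda>x y. lex_le y x) ls"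

definition lyndon_factors :: "nat list \<Rightarrow> nat list list" where
  "lyndon_factors w = (THE ls. is_lyndon_factorization ls w)"

definition words :: "nat \<Rightarrow> nat \<Rightarrow> nat list set" where
  "words k n = {w. length w = n \<and> set w \<subseteq> {..<k}}"

definition words_o :: "nat \<Rightarrow> nat \<Rightarrow> nat list set" where
  "words_o k n = {w \<in> words k n.
     (\<forall>l\<in>set (lyndon_factors w). odd (length l)) \<and> distinct (lyndon_factors w)}"

definition words_e :: "nat \<Rightarrow> nat \<Rightarrow> nat list set" where
  "words_e k n = {w \<in> words k n.
     (\<forall>l\<in>set (lyndon_factors w). odd (length l) \<longrightarrow> length l = 1) \<and>
     length (filter (\<lambda>l. odd (length l)) (lyndon_factors w)) \<le> 1}"

text \<open>wt(w) = x_1^{alpha_1} ... x_k^{alpha_k}: letter i occurs alpha!i times.\<close>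
definition has_weight :: "nat list \<Rightarrow> nat list \<Rightarrow> bool" where
  "has_weight \<alpha> w \<longleftrightarrow> (\<forall>i<length \<alpha>. count_list w i = \<alpha> ! i)"

end

theory Submission
  imports Defs "HOL-Library.List_Lexorder" "HOL-Library.Multiset" "HOL-Library.Disjoint_Sets"
begin

text \<open>
  By the Chen--Fox--Lyndon theorem a word is the same thing as the multiset of its Lyndon
  factors, so for a fixed content \<open>A\<close> the left-hand side counts sets of odd-length Lyndon
  words (call the number \<open>O(A)\<close>), and the right-hand side counts multisets of even-length
  Lyndon words (\<open>E(A)\<close>) plus possibly one letter, i.e. \<open>E(A) + \<Sum>\<^sub>i E(A - a\<^sub>i)\<close>.

  Consider the signed count \<open>G(A) = \<Sum> (-1)\<^bsup>|u|\<^esup>\<close> over pairs of a set \<open>S\<close> of odd-length Lyndon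
  words and a word \<open>u\<close> of total content \<open>A\<close>, i.e. the coefficients of \<open>O/(1 + x\<^sub>1 + \<dots> + x\<^sub>k)\<close>.
  Removing the first letter of \<open>u\<close> gives \<open>O(A) = G(A) + \<Sum>\<^sub>i G(A - a\<^sub>i)\<close>. On the other hand,
  replacing \<open>u\<close> by its multiset \<open>M\<close> of Lyndon factors and moving the largest odd-length
  Lyndon word of \<open>S + M\<close> from one side to the other is a sign-reversing involution whose
  fixed points are the pairs with \<open>S = {}\<close> and \<open>M\<close> of even lengths only; hence \<open>G(A) = E(A)\<close>.
\<close>

lemma lex_less_iff_less [simp]: "lex_less u v \<longleftrightarrow> u < v"
  by (simp add: lex_less_def list_less_def)

lemma lex_le_iff_le [simp]: "lex_le u v \<longleftrightarrow> u \<le> v"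
  by (auto simp add: lex_le_def list_le_def)

lemma list_le_append: "(u :: 'a :: linorder list) \<le> u @ v"
  by (cases v) (simp_all add: list_le_def list_less_def lexord_append_rightI)

lemma list_less_append_append:
  "(u :: 'a :: linorder list) < w \<Longrightarrow> length w \<le> length u \<Longrightarrow> u @ v < w @ z"
  unfolding list_less_def by (rule lexord_sufI)

lemma list_less_append_cancel [simp]: "((x :: 'a :: linorder list) @ u < x @ v) \<longleftrightarrow> u < v"
  by (simp add: list_less_def irrefl_def)

lemma lyndon_less_drop: "lyndon w \<Longrightarrow> 0 < i \<Longrightarrow> i < length w \<Longrightarrow> w < drop i w"
  by (simp add: lyndon_def)

lemma lyndon_singleton: "lyndon [a]"
  by (auto simp add: lyndon_def)

lemma lyndon_append_less:
  assumes u: "lyndon u" and v: "lyndon v" and "u < v"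
  shows "u @ v < v"
proof -
  have "(u, v) \<in> lexord {(a, b). a < b}" using \<open>u < v\<close> by (simp add: list_less_def)
  then consider (prefix) y where "y \<noteq> []" "v = u @ y"
    | (differ) p a b r s where "a < b" "u = p @ a # r" "v = p @ b # s"
    unfolding lexord_def by auto
  then show ?thesis
  proof cases
    case prefix
    have "v < drop (length u) v"
      using u v prefix by (intro lyndon_less_drop) (auto simp: lyndon_def)
    then show ?thesis using prefix by simp
  next
    case differ
    then show ?thesis by (simp add: list_less_def lexord_append_left_rightI)
  qed
qed

lemma lyndon_append:
  assumes u: "lyndon u" and v: "lyndon v" and "u < v"
  shows "lyndon (u @ v)"
  unfolding lyndon_def lex_less_iff_less
proof (intro conjI allI impI)
  show "u @ v \<noteq> []" using u by (simp add: lyndon_def)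
  fix i assume i: "0 < i \<and> i < length (u @ v)"
  have "u @ v < v" using assms by (rule lyndon_append_less)
  consider "i < length u" | "i = length u" | "length u < i" by linarith
  then show "u @ v < drop i (u @ v)"
  proof cases
    case 1
    then have "u < drop i u" using u i by (intro lyndon_less_drop) auto
    then show ?thesis using 1 by (simp add: list_less_append_append)
  next
    case 2
    then show ?thesis using \<open>u @ v < v\<close> by simp
  next
    case 3
    then have "v < drop (i - length u) v" using v i by (intro lyndon_less_drop) auto
    then show ?thesis using 3 \<open>u @ v < v\<close> by simp
  qed
qed

subsection \<open>The Lyndon factorization\<close>

lemma is_lyndon_factorization_iff:
  "is_lyndon_factorization ls w \<longleftrightarrow>
     concat ls = w \<and> (\<forall>l\<in>set ls. lyndon l) \<and> sorted_wrt (\<ge>) ls"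
  by (simp add: is_lyndon_factorization_def)

lemma lyndon_factorization_Cons_exists:
  "lyndon x \<Longrightarrow> \<forall>l\<in>set ls. lyndon l \<Longrightarrow> sorted_wrt (\<ge>) ls
   \<Longrightarrow> \<exists>ls'. is_lyndon_factorization ls' (x @ concat ls)"
proof (induction ls arbitrary: x)
  case Nil
  then show ?case by (intro exI[of _ "[x]"]) (simp add: is_lyndon_factorization_iff)
next
  case (Cons l ls)
  show ?case
  proof (cases "l \<le> x")
    case True
    then have "is_lyndon_factorization (x # l # ls) (x @ concat (l # ls))"
      using Cons.prems by (auto simp: is_lyndon_factorization_iff intro: order_trans)
    then show ?thesis ..
  next
    case False
    then have "lyndon (x @ l)" using Cons.prems by (intro lyndon_append) auto
    from Cons.IH[OF this] Cons.prems show ?thesis by auto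
  qed
qed

lemma lyndon_factorization_exists: "\<exists>ls. is_lyndon_factorization ls w"
proof (induction w)
  case Nil
  have "is_lyndon_factorization [] []" by (simp add: is_lyndon_factorization_iff)
  then show ?case ..
next
  case (Cons a w)
  then obtain ls where "is_lyndon_factorization ls w" ..
  then show ?case
    using lyndon_factorization_Cons_exists[OF lyndon_singleton[of a], of ls]
    by (auto simp: is_lyndon_factorization_iff)
qed

lemma suffix_le_of_prefix_concat:
  "q \<noteq> [] \<Longrightarrow> concat ls = q @ r \<Longrightarrow> \<forall>x\<in>set ls. x \<le> (m :: 'a :: linorder list)
   \<Longrightarrow> \<exists>t p. t \<noteq> [] \<and> q = p @ t \<and> t \<le> m"
proof (induction ls arbitrary: q)
  case Nil
  then show ?case by simp
next
  case (Cons x xs)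
  show ?case
  proof (cases "length q \<le> length x")
    case True
    with Cons.prems(2) obtain s where "x = q @ s"
      by (auto simp: append_eq_append_conv2)
    then have "q \<le> m" using Cons.prems(3) list_le_append[of q s] by auto
    then show ?thesis using Cons.prems(1) by blast
  next
    case False
    with Cons.prems(2) obtain q' where q': "q = x @ q'" "concat xs = q' @ r"
      by (auto simp: append_eq_append_conv2)
    with False Cons.IH[of q'] Cons.prems(3) obtain t p where "t \<noteq> []" "q' = p @ t" "t \<le> m"
      by auto
    then show ?thesis using q' by (intro exI[of _ t] exI[of _ "x @ p"]) auto
  qed
qed

text \<open>A longer Lyndon prefix would be smaller than one of its proper suffixes, but that suffix
  ends inside a later factor and is therefore bounded by the first factor.\<close>
lemma lyndon_factorization_first_longest:
  assumes f: "is_lyndon_factorization (l # ls) w" and p: "lyndon p" and w: "w = p @ r"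
  shows "length p \<le> length l"
proof (rule ccontr)
  assume "\<not> length p \<le> length l"
  moreover have "w = l @ concat ls" using f by (simp add: is_lyndon_factorization_iff)
  ultimately obtain q where q: "p = l @ q" "concat ls = q @ r" "q \<noteq> []"
    using w by (auto simp: append_eq_append_conv2)
  moreover have "\<forall>x\<in>set ls. x \<le> l" using f by (simp add: is_lyndon_factorization_iff)
  ultimately obtain t p' where t: "t \<noteq> []" "q = p' @ t" "t \<le> l"
    using suffix_le_of_prefix_concat[OF q(3) q(2)] by blast
  have "l \<noteq> []" using f by (simp add: is_lyndon_factorization_iff lyndon_def)
  then have "p < drop (length l + length p') p"
    using p t q by (intro lyndon_less_drop) auto
  then have "p < t" using q t by simp
  also have "t \<le> l" by fact
  also have "l \<le> p" using q by (simp add: list_le_append)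
  finally show False by simp
qed

lemma lyndon_factorization_unique:
  "is_lyndon_factorization ls w \<Longrightarrow> is_lyndon_factorization ls' w \<Longrightarrow> ls = ls'"
proof (induction ls arbitrary: ls' w)
  case Nil
  then show ?case by (cases ls') (auto simp: is_lyndon_factorization_iff lyndon_def)
next
  case (Cons l ls)
  have "w \<noteq> []" using Cons.prems(1) by (auto simp: is_lyndon_factorization_iff lyndon_def)
  then obtain l' xs' where ls': "ls' = l' # xs'" using Cons.prems(2)
    by (cases ls') (auto simp: is_lyndon_factorization_iff)
  have w: "w = l @ concat ls" "w = l' @ concat xs'"
    using Cons.prems ls' by (auto simp: is_lyndon_factorization_iff)
  have "length l' \<le> length l"
    using lyndon_factorization_first_longest[OF Cons.prems(1)] w(2) Cons.prems(2) ls'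
    by (auto simp: is_lyndon_factorization_iff)
  moreover have "length l \<le> length l'"
    using lyndon_factorization_first_longest[of l' xs' w l] w(1) Cons.prems ls'
    by (auto simp: is_lyndon_factorization_iff)
  ultimately have "l = l'" using w by (metis append_eq_append_conv le_antisym)
  moreover have "ls = xs'"
    using Cons.prems ls' w \<open>l = l'\<close>
    by (intro Cons.IH[of "concat ls"]) (auto simp: is_lyndon_factorization_iff)
  ultimately show ?case using ls' by simp
qed

lemma is_lyndon_factorization_lyndon_factors:
  "is_lyndon_factorization (lyndon_factors w) w"
  unfolding lyndon_factors_def
  using lyndon_factorization_exists lyndon_factorization_unique by (metis theI)

lemma lyndon_factors_eqI: "is_lyndon_factorization ls w \<Longrightarrow> lyndon_factors w = ls"
  using lyndon_factorization_unique is_lyndon_factorization_lyndon_factors by blast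

subsection \<open>Words as multisets of Lyndon words\<close>

definition weight :: "'a list multiset \<Rightarrow> 'a multiset" where
  "weight M = (\<Sum>l\<in>#M. mset l)"

definition lyndon_msets :: "(nat list multiset \<Rightarrow> bool) \<Rightarrow> nat multiset \<Rightarrow> nat list multiset set"
  where "lyndon_msets P A = {M. (\<forall>l\<in>#M. lyndon l) \<and> weight M = A \<and> P M}"

definition factor_mset :: "nat list \<Rightarrow> nat list multiset" where
  "factor_mset w = mset (lyndon_factors w)"

definition concat_mset :: "nat list multiset \<Rightarrow> nat list" where
  "concat_mset M = concat (rev (sorted_list_of_multiset M))"

lemma weight_empty [simp]: "weight {#} = {#}"
  and weight_add_mset [simp]: "weight (add_mset l M) = mset l + weight M"
  and weight_union [simp]: "weight (M + N) = weight M + weight N"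
  by (simp_all add: weight_def)

lemma weight_mset: "weight (mset ls) = mset (concat ls)"
  by (induction ls) simp_all

lemma lyndon_factor_mset: "l \<in># factor_mset w \<Longrightarrow> lyndon l"
  using is_lyndon_factorization_lyndon_factors[of w]
  by (simp add: factor_mset_def is_lyndon_factorization_iff)

lemma weight_factor_mset [simp]: "weight (factor_mset w) = mset w"
  using is_lyndon_factorization_lyndon_factors[of w]
  by (simp add: factor_mset_def weight_mset is_lyndon_factorization_iff)

lemma factor_mset_concat_mset [simp]:
  assumes "\<forall>l\<in>#M. lyndon l"
  shows "factor_mset (concat_mset M) = M"
proof -
  have "is_lyndon_factorization (rev (sorted_list_of_multiset M)) (concat_mset M)"
    using assms by (simp add: is_lyndon_factorization_iff concat_mset_def sorted_wrt_rev)
  then show ?thesis by (simp add: factor_mset_def lyndon_factors_eqI)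
qed

lemma mset_concat_mset: "\<forall>l\<in>#M. lyndon l \<Longrightarrow> mset (concat_mset M) = weight M"
  using weight_factor_mset[of "concat_mset M"] by simp

lemma concat_mset_factor_mset [simp]: "concat_mset (factor_mset w) = w"
proof -
  let ?ls = "lyndon_factors w"
  have fact: "is_lyndon_factorization ?ls w" by (rule is_lyndon_factorization_lyndon_factors)
  then have "sorted (rev ?ls)" by (simp add: is_lyndon_factorization_iff sorted_wrt_rev)
  then have "sorted_list_of_multiset (factor_mset w) = rev ?ls"
    by (metis factor_mset_def mset_rev sorted_list_of_multiset_mset sorted_sort_id)
  then show ?thesis using fact by (simp add: concat_mset_def is_lyndon_factorization_iff)
qed

lemma bij_betw_factor_mset:
  "bij_betw factor_mset {w. mset w = A \<and> P (factor_mset w)} (lyndon_msets P A)"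
  by (rule bij_betw_byWitness[where f' = concat_mset])
     (auto simp: lyndon_msets_def lyndon_factor_mset mset_concat_mset)

lemma finite_lists_mset_subset: "finite {w :: 'a list. mset w \<subseteq># A}"
proof (rule finite_subset)
  show "{w. mset w \<subseteq># A} \<subseteq> {w. set w \<subseteq> set_mset A \<and> length w \<le> size A}"
    by (auto dest: mset_subset_eqD size_mset_mono)
  show "finite {w. set w \<subseteq> set_mset A \<and> length w \<le> size A}"
    by (rule finite_lists_length_le) simp
qed

lemma finite_lyndon_msets_weight_subset:
  "finite {M. (\<forall>l\<in>#M. lyndon l) \<and> weight M \<subseteq># A}"
proof (rule finite_surj[OF finite_lists_mset_subset])
  show "{M. (\<forall>l\<in>#M. lyndon l) \<and> weight M \<subseteq># A} \<subseteq> factor_mset ` {w. mset w \<subseteq># A}"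
  proof
    fix M assume "M \<in> {M. (\<forall>l\<in>#M. lyndon l) \<and> weight M \<subseteq># A}"
    then show "M \<in> factor_mset ` {w. mset w \<subseteq># A}"
      by (intro image_eqI[of _ _ "concat_mset M"]) (auto simp: mset_concat_mset)
  qed
qed

lemma finite_lyndon_msets: "finite (lyndon_msets P A)"
  by (rule finite_subset[OF _ finite_lyndon_msets_weight_subset[of A]])
     (auto simp: lyndon_msets_def)

definition odd_distinct :: "nat list multiset \<Rightarrow> bool" where
  "odd_distinct M \<longleftrightarrow> (\<forall>l\<in>#M. odd (length l)) \<and> (\<forall>l. count M l \<le> 1)"

definition all_even :: "nat list multiset \<Rightarrow> bool" where
  "all_even M \<longleftrightarrow> (\<forall>l\<in>#M. even (length l))"

definition even_but_one_letter :: "nat list multiset \<Rightarrow> bool" where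
  "even_but_one_letter M \<longleftrightarrow>
     (\<forall>l\<in>#M. odd (length l) \<longrightarrow> length l = 1) \<and> size (filter_mset (\<lambda>l. odd (length l)) M) \<le> 1"

lemma even_size_weight: "all_even M \<Longrightarrow> even (size (weight M))"
  by (induction M) (auto simp: all_even_def)

lemma all_even_iff_filter_odd_empty:
  "all_even M \<longleftrightarrow> filter_mset (\<lambda>l. odd (length l)) M = {#}"
  by (auto simp: all_even_def filter_mset_eq_mempty_iff)

lemma even_but_one_letter_iff:
  "even_but_one_letter M \<longleftrightarrow> all_even M \<or> (\<exists>i N. M = add_mset [i] N \<and> all_even N)"
proof
  let ?O = "filter_mset (\<lambda>l. odd (length l))"
  assume M: "even_but_one_letter M"
  then have "size (?O M) \<le> 1" by (simp add: even_but_one_letter_def)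
  then consider "size (?O M) = 0" | "size (?O M) = 1" by linarith
  then show "all_even M \<or> (\<exists>i N. M = add_mset [i] N \<and> all_even N)"
  proof cases
    case 1
    then show ?thesis by (simp add: all_even_iff_filter_odd_empty)
  next
    case 2
    then obtain l where l: "?O M = {#l#}" by (meson size_1_singleton_mset)
    then have "l \<in># ?O M" by simp
    then have l_in: "l \<in># M" and l_odd: "odd (length l)" by simp_all
    with M obtain i where "l = [i]"
      by (auto simp: even_but_one_letter_def length_Suc_conv)
    moreover define N where "N = M - {#l#}"
    moreover have M_eq: "M = add_mset l N" using l_in by (simp add: N_def)
    moreover have "all_even N"
      using l l_odd unfolding M_eq by (simp add: all_even_iff_filter_odd_empty)
    ultimately show ?thesis by blast
  qed
next
  assume "all_even M \<or> (\<exists>i N. M = add_mset [i] N \<and> all_even N)"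
  then consider "all_even M" | i N where "M = add_mset [i] N" "all_even N" by blast
  then show "even_but_one_letter M"
  proof cases
    case 1
    then have "filter_mset (\<lambda>l. odd (length l)) M = {#}"
      by (simp add: all_even_iff_filter_odd_empty)
    then have "size (filter_mset (\<lambda>l. odd (length l)) M) \<le> 1" by (metis size_empty le0)
    then show ?thesis using 1 by (auto simp: even_but_one_letter_def all_even_def)
  next
    case 2
    then have "filter_mset (\<lambda>l. odd (length l)) M = {#[i]#}"
      by (simp add: all_even_iff_filter_odd_empty)
    then have "size (filter_mset (\<lambda>l. odd (length l)) M) \<le> 1" by (metis size_single order_refl)
    then show ?thesis using 2 by (auto simp: even_but_one_letter_def all_even_def)
  qed
qed

lemma lyndon_msets_even_but_one_letter:
  "lyndon_msets even_but_one_letter A =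
     lyndon_msets all_even A \<union> (\<Union>i\<in>set_mset A. add_mset [i] ` lyndon_msets all_even (A - {#i#}))"
proof (intro set_eqI iffI)
  fix M assume "M \<in> lyndon_msets even_but_one_letter A"
  then have M: "\<forall>l\<in>#M. lyndon l" "weight M = A" "even_but_one_letter M"
    by (auto simp: lyndon_msets_def)
  from M(3) consider "all_even M" | i N where "M = add_mset [i] N" "all_even N"
    by (auto simp: even_but_one_letter_iff)
  then show "M \<in> lyndon_msets all_even A \<union>
      (\<Union>i\<in>set_mset A. add_mset [i] ` lyndon_msets all_even (A - {#i#}))"
  proof cases
    case 1
    then show ?thesis using M by (simp add: lyndon_msets_def)
  next
    case 2
    then have "i \<in># A" "N \<in> lyndon_msets all_even (A - {#i#})"
      using M by (auto simp: lyndon_msets_def)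
    then show ?thesis using 2 by blast
  qed
next
  fix M assume "M \<in> lyndon_msets all_even A \<union>
      (\<Union>i\<in>set_mset A. add_mset [i] ` lyndon_msets all_even (A - {#i#}))"
  then show "M \<in> lyndon_msets even_but_one_letter A"
    by (auto simp: lyndon_msets_def even_but_one_letter_iff lyndon_singleton)
qed

lemma card_lyndon_msets_even_but_one_letter:
  "card (lyndon_msets even_but_one_letter A) =
     card (lyndon_msets all_even A) + (\<Sum>i\<in>set_mset A. card (lyndon_msets all_even (A - {#i#})))"
proof -
  have no_letter: "add_mset [i] N \<notin> lyndon_msets all_even B" for i N B
    by (simp add: lyndon_msets_def all_even_def)
  let ?U = "\<Union>i\<in>set_mset A. add_mset [i] ` lyndon_msets all_even (A - {#i#})"
  have "card ?U = (\<Sum>i\<in>set_mset A. card (add_mset [i] ` lyndon_msets all_even (A - {#i#})))"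
    by (rule card_UN_disjoint) (auto simp: finite_lyndon_msets add_eq_conv_ex no_letter)
  also have "\<dots> = (\<Sum>i\<in>set_mset A. card (lyndon_msets all_even (A - {#i#})))"
    by (intro sum.cong refl card_image) (simp add: inj_on_def)
  finally have "card ?U = \<dots>" .
  moreover have "card (lyndon_msets all_even A \<union> ?U) = card (lyndon_msets all_even A) + card ?U"
    by (rule card_Un_disjoint) (auto simp: finite_lyndon_msets no_letter)
  ultimately show ?thesis by (simp add: lyndon_msets_even_but_one_letter)
qed

subsection \<open>A signed count\<close>

definition odd_word_pairs :: "nat multiset \<Rightarrow> (nat list multiset \<times> nat list) set" where
  "odd_word_pairs A = {(S, u). (\<forall>l\<in>#S. lyndon l) \<and> odd_distinct S \<and> weight S + mset u = A}"

definition signed_count :: "nat multiset \<Rightarrow> int" where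
  "signed_count A = (\<Sum>p\<in>odd_word_pairs A. (-1) ^ length (snd p))"

lemma finite_odd_word_pairs: "finite (odd_word_pairs A)"
proof (rule finite_subset)
  show "odd_word_pairs A \<subseteq>
      {S. (\<forall>l\<in>#S. lyndon l) \<and> weight S \<subseteq># A} \<times> {u. mset u \<subseteq># A}"
    by (auto simp: odd_word_pairs_def)
  show "finite ({S. (\<forall>l\<in>#S. lyndon l) \<and> weight S \<subseteq># A} \<times> {u. mset u \<subseteq># A})"
    by (intro finite_cartesian_product finite_lyndon_msets_weight_subset finite_lists_mset_subset)
qed

lemma odd_word_pairs_split_first:
  "odd_word_pairs A = (\<lambda>S. (S, [])) ` lyndon_msets odd_distinct A \<union>
     (\<Union>i\<in>set_mset A. apsnd ((#) i) ` odd_word_pairs (A - {#i#}))"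
proof (intro set_eqI iffI)
  fix p assume "p \<in> odd_word_pairs A"
  then obtain S u where p: "p = (S, u)" "\<forall>l\<in>#S. lyndon l" "odd_distinct S" "weight S + mset u = A"
    by (auto simp: odd_word_pairs_def)
  show "p \<in> (\<lambda>S. (S, [])) ` lyndon_msets odd_distinct A \<union>
     (\<Union>i\<in>set_mset A. apsnd ((#) i) ` odd_word_pairs (A - {#i#}))"
  proof (cases u)
    case Nil
    then show ?thesis using p by (auto simp: lyndon_msets_def)
  next
    case (Cons i u')
    then have "i \<in># A" "(S, u') \<in> odd_word_pairs (A - {#i#})" "p = apsnd ((#) i) (S, u')"
      using p by (auto simp: odd_word_pairs_def)
    then show ?thesis by blast
  qed
next
  fix p assume "p \<in> (\<lambda>S. (S, [])) ` lyndon_msets odd_distinct A \<union>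
     (\<Union>i\<in>set_mset A. apsnd ((#) i) ` odd_word_pairs (A - {#i#}))"
  then consider (empty) S where "p = (S, [])" "S \<in> lyndon_msets odd_distinct A"
    | (cons) i S u where "i \<in># A" "p = (S, i # u)" "(S, u) \<in> odd_word_pairs (A - {#i#})"
    by fastforce
  then show "p \<in> odd_word_pairs A"
  proof cases
    case empty
    then show ?thesis by (simp add: odd_word_pairs_def lyndon_msets_def)
  next
    case cons
    then have "weight S + mset (i # u) = add_mset i (A - {#i#})"
      by (simp add: odd_word_pairs_def)
    then show ?thesis using cons by (simp add: odd_word_pairs_def)
  qed
qed

lemma sum_sign_apsnd_Cons_odd_word_pairs:
  "(\<Sum>p\<in>apsnd ((#) i) ` odd_word_pairs B. (-1) ^ length (snd p)) = - signed_count B"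
proof -
  have "inj (apsnd ((#) i) :: nat list multiset \<times> nat list \<Rightarrow> _)" by (simp add: inj_def)
  then show ?thesis
    by (simp add: sum.reindex[OF inj_on_subset[OF _ subset_UNIV]] signed_count_def sum_negf)
qed

lemma card_lyndon_msets_odd_distinct_eq_signed_counts:
  "int (card (lyndon_msets odd_distinct A)) =
     signed_count A + (\<Sum>i\<in>set_mset A. signed_count (A - {#i#}))"
proof -
  define sign :: "nat list multiset \<times> nat list \<Rightarrow> int" where "sign p = (-1) ^ length (snd p)" for p
  define empty where "empty = (\<lambda>S. (S, [] :: nat list)) ` lyndon_msets odd_distinct A"
  define cons where "cons i = apsnd ((#) i) ` odd_word_pairs (A - {#i#})" for i
  have "sum sign empty = (\<Sum>S\<in>lyndon_msets odd_distinct A. 1)"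
    unfolding empty_def
    by (rule sum.reindex_cong[where l = "\<lambda>S. (S, [])"]) (simp_all add: inj_on_def sign_def)
  then have sum_empty: "sum sign empty = int (card (lyndon_msets odd_distinct A))" by simp
  have "sum sign (\<Union>i\<in>set_mset A. cons i) = (\<Sum>i\<in>set_mset A. sum sign (cons i))"
  proof (rule sum.UNION_disjoint)
    show "\<forall>i\<in>set_mset A. \<forall>j\<in>set_mset A. i \<noteq> j \<longrightarrow> cons i \<inter> cons j = {}"
      by (auto simp: cons_def)
  qed (simp_all add: cons_def finite_odd_word_pairs)
  then have sum_cons:
    "sum sign (\<Union>i\<in>set_mset A. cons i) = - (\<Sum>i\<in>set_mset A. signed_count (A - {#i#}))"
    by (simp add: cons_def sign_def sum_sign_apsnd_Cons_odd_word_pairs sum_negf)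
  have "signed_count A = sum sign (odd_word_pairs A)" by (simp add: signed_count_def sign_def)
  also have "odd_word_pairs A = empty \<union> (\<Union>i\<in>set_mset A. cons i)"
    unfolding empty_def cons_def by (rule odd_word_pairs_split_first)
  also have "sum sign (empty \<union> (\<Union>i\<in>set_mset A. cons i)) =
      sum sign empty + sum sign (\<Union>i\<in>set_mset A. cons i)"
  proof (rule sum.union_disjoint)
    show "empty \<inter> (\<Union>i\<in>set_mset A. cons i) = {}" by (auto simp: empty_def cons_def)
  qed (simp_all add: empty_def cons_def finite_lyndon_msets finite_odd_word_pairs)
  finally show ?thesis using sum_empty sum_cons by linarith
qed

fun toggle :: "'a \<Rightarrow> 'a multiset \<times> 'a multiset \<Rightarrow> 'a multiset \<times> 'a multiset" where
  "toggle x (S, M) = (if x \<in># S then (S - {#x#}, add_mset x M) else (add_mset x S, M - {#x#}))"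

lemma toggle_union:
  "x \<in># S + M \<Longrightarrow> toggle x (S, M) = (S', M') \<Longrightarrow> S' + M' = S + M"
  by (auto split: if_splits)

lemma toggle_toggle:
  assumes "x \<in># S + M" "count S x \<le> 1"
  shows "toggle x (toggle x (S, M)) = (S, M)"
proof (cases "x \<in># S")
  case True
  then have "x \<notin># S - {#x#}" using assms(2) by (simp add: not_in_iff)
  then show ?thesis using True by simp
next
  case False
  then show ?thesis using assms(1) by simp
qed

lemma toggle_neq: "toggle x (S, M) \<noteq> (S, M)"
proof (cases "x \<in># S")
  case True
  then have "add_mset x (S - {#x#}) = S" by simp
  then have "S - {#x#} \<noteq> S" by (metis multi_self_add_other_not_self)
  then show ?thesis using True by simp
next
  case False
  then show ?thesis by simp
qed

definition odd_mset_pairs :: "nat multiset \<Rightarrow> (nat list multiset \<times> nat list multiset) set" where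
  "odd_mset_pairs A =
     {(S, M). (\<forall>l\<in>#S + M. lyndon l) \<and> odd_distinct S \<and> weight S + weight M = A}"

lemma bij_betw_apsnd_factor_mset:
  "bij_betw (apsnd factor_mset) (odd_word_pairs A) (odd_mset_pairs A)"
  by (rule bij_betw_byWitness[where f' = "apsnd concat_mset"])
     (auto simp: odd_word_pairs_def odd_mset_pairs_def lyndon_factor_mset mset_concat_mset)

lemma finite_odd_mset_pairs: "finite (odd_mset_pairs A)"
  using bij_betw_finite[OF bij_betw_apsnd_factor_mset] finite_odd_word_pairs by blast

lemma signed_count_odd_mset_pairs:
  "signed_count A = (\<Sum>p\<in>odd_mset_pairs A. (-1) ^ size (weight (snd p)))"
  using sum.reindex_bij_betw[OF bij_betw_apsnd_factor_mset,
      of "\<lambda>p. (-1) ^ size (weight (snd p))"]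
  by (simp add: signed_count_def)

lemma toggle_odd_mset_pairs:
  assumes p: "(S, M) \<in> odd_mset_pairs A" and l: "l \<in># S + M" "odd (length l)"
    and t: "toggle l (S, M) = (S', M')"
  shows "(S', M') \<in> odd_mset_pairs A"
    and "(-1::int) ^ size (weight M') = - ((-1) ^ size (weight M))"
proof -
  from t consider (remove) "l \<in># S" "S' = S - {#l#}" "M' = add_mset l M"
    | (add) "l \<notin># S" "l \<in># M" "S' = add_mset l S" "M' = M - {#l#}"
    using l(1) by (auto split: if_splits)
  note cases = this
  have "odd_distinct S'"
    using cases p l(2)
    by cases (auto simp: odd_mset_pairs_def odd_distinct_def not_in_iff dest: in_diffD
        intro: le_trans[OF diff_le_self])
  moreover have union: "S' + M' = S + M" using l(1) t by (rule toggle_union)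
  then have "\<forall>x\<in>#S' + M'. lyndon x" and "weight S' + weight M' = A"
    using p by (simp_all add: odd_mset_pairs_def flip: weight_union)
  ultimately show "(S', M') \<in> odd_mset_pairs A" by (simp add: odd_mset_pairs_def)
  have "size (weight M) = size (weight M') + length l \<or>
      size (weight M') = size (weight M) + length l"
    using cases by cases (auto dest!: multi_member_split)
  then show "(-1::int) ^ size (weight M') = - ((-1) ^ size (weight M))"
    using l(2) by (elim disjE) (simp_all add: power_add neg_one_odd_power)
qed

fun odd_words :: "nat list multiset \<times> nat list multiset \<Rightarrow> nat list set" where
  "odd_words (S, M) = {l. l \<in># S + M \<and> odd (length l)}"

text \<open>The toggled word has to depend on \<open>S + M\<close> only, which toggling does not change.\<close>
definition toggle_max_odd ::
  "nat list multiset \<times> nat list multiset \<Rightarrow> nat list multiset \<times> nat list multiset" where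
  "toggle_max_odd p = toggle (Max (odd_words p)) p"

lemma finite_odd_words: "finite (odd_words p)"
  by (cases p) (simp add: finite_subset[of _ "set_mset _"] subset_iff)

lemma toggle_max_odd_involution:
  assumes p: "p \<in> odd_mset_pairs A" and nonempty: "odd_words p \<noteq> {}"
  shows "toggle_max_odd p \<in> odd_mset_pairs A"
    and "odd_words (toggle_max_odd p) = odd_words p"
    and "toggle_max_odd (toggle_max_odd p) = p"
    and "toggle_max_odd p \<noteq> p"
    and "(-1::int) ^ size (weight (snd (toggle_max_odd p))) = - ((-1) ^ size (weight (snd p)))"
proof -
  obtain S M where SM: "p = (S, M)" by (cases p)
  define l where "l = Max (odd_words p)"
  have "l \<in> odd_words p" unfolding l_def using finite_odd_words nonempty by (rule Max_in)
  then have l: "l \<in># S + M" "odd (length l)" by (simp_all add: SM)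
  obtain S' M' where t: "toggle l (S, M) = (S', M')" by (cases "toggle l (S, M)")
  have toggled: "toggle_max_odd p = (S', M')" using t by (simp add: toggle_max_odd_def SM l_def)
  have "S' + M' = S + M" using l(1) t by (rule toggle_union)
  then have same: "odd_words (S', M') = odd_words p" by (simp only: odd_words.simps SM)
  show "toggle_max_odd p \<in> odd_mset_pairs A"
    using toggle_odd_mset_pairs(1)[OF p[unfolded SM] l t] by (simp add: toggled)
  show "odd_words (toggle_max_odd p) = odd_words p" using same by (simp add: toggled)
  have "count S l \<le> 1" using p by (simp add: SM odd_mset_pairs_def odd_distinct_def)
  then show "toggle_max_odd (toggle_max_odd p) = p"
    using toggle_toggle[OF l(1)] t same by (simp add: toggled toggle_max_odd_def SM l_def)
  show "toggle_max_odd p \<noteq> p"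
    unfolding toggled using toggle_neq[of l S M] by (simp only: t SM not_False_eq_True)
  show "(-1::int) ^ size (weight (snd (toggle_max_odd p))) = - ((-1) ^ size (weight (snd p)))"
    unfolding toggled using toggle_odd_mset_pairs(2)[OF p[unfolded SM] l t] by (simp add: SM)
qed

lemma odd_mset_pairs_without_odd_words:
  "{p \<in> odd_mset_pairs A. odd_words p = {}} = (\<lambda>M. ({#}, M)) ` lyndon_msets all_even A"
proof (intro set_eqI iffI)
  fix p assume "p \<in> {p \<in> odd_mset_pairs A. odd_words p = {}}"
  then obtain S M where p: "p = (S, M)" "(S, M) \<in> odd_mset_pairs A" "odd_words (S, M) = {}"
    by (cases p) simp
  then have "\<forall>l\<in>#S. False" and "all_even M"
    by (auto simp: odd_mset_pairs_def odd_distinct_def all_even_def)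
  then show "p \<in> (\<lambda>M. ({#}, M)) ` lyndon_msets all_even A"
    using p by (auto simp: odd_mset_pairs_def lyndon_msets_def)
qed (auto simp: odd_mset_pairs_def odd_distinct_def all_even_def lyndon_msets_def)

lemma signed_count_eq_card_lyndon_msets_all_even:
  "signed_count A = int (card (lyndon_msets all_even A))"
proof -
  define sign :: "nat list multiset \<times> nat list multiset \<Rightarrow> int"
    where "sign p = (-1) ^ size (weight (snd p))" for p
  define fixed where "fixed = {p \<in> odd_mset_pairs A. odd_words p = {}}"
  define moved where "moved = {p \<in> odd_mset_pairs A. odd_words p \<noteq> {}}"
  have "sum sign moved = 0"
  proof (rule sum_involution_eq_0[where h = toggle_max_odd])
    fix p assume "p \<in> moved"
    then have "p \<in> odd_mset_pairs A" "odd_words p \<noteq> {}" by (simp_all add: moved_def)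
    note inv = toggle_max_odd_involution[OF this]
    show "sign (toggle_max_odd p) + sign p = 0" using inv(5) by (simp add: sign_def)
    show "toggle_max_odd p \<in> moved" using inv(1,2) \<open>odd_words p \<noteq> {}\<close> by (simp add: moved_def)
    show "toggle_max_odd (toggle_max_odd p) = p" by (rule inv(3))
    show "toggle_max_odd p \<noteq> p" by (rule inv(4))
  qed
  moreover have "fixed = (\<lambda>M. ({#}, M)) ` lyndon_msets all_even A"
    unfolding fixed_def by (rule odd_mset_pairs_without_odd_words)
  then have "sum sign fixed = (\<Sum>M\<in>lyndon_msets all_even A. 1)"
    by (intro sum.reindex_cong[where l = "\<lambda>M. ({#}, M)"])
       (auto simp: inj_on_def sign_def lyndon_msets_def dest: even_size_weight)
  moreover have "signed_count A = sum sign fixed + sum sign moved"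
  proof -
    have "signed_count A = sum sign (odd_mset_pairs A)"
      by (simp add: signed_count_odd_mset_pairs sign_def)
    also have "\<dots> = sum sign (fixed \<union> moved)"
      by (rule arg_cong[where f = "sum sign"]) (auto simp: fixed_def moved_def)
    also have "\<dots> = sum sign fixed + sum sign moved"
      by (rule sum.union_disjoint)
         (auto simp: fixed_def moved_def intro: finite_subset[OF _ finite_odd_mset_pairs])
    finally show ?thesis .
  qed
  ultimately show ?thesis by simp
qed

lemma card_lyndon_msets_odd_distinct_eq_even_but_one_letter:
  "card (lyndon_msets odd_distinct A) = card (lyndon_msets even_but_one_letter A)"
proof -
  have "int (card (lyndon_msets odd_distinct A)) =
      int (card (lyndon_msets all_even A)) +
      (\<Sum>i\<in>set_mset A. int (card (lyndon_msets all_even (A - {#i#}))))"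
    by (simp add: card_lyndon_msets_odd_distinct_eq_signed_counts
        signed_count_eq_card_lyndon_msets_all_even)
  also have "\<dots> = int (card (lyndon_msets even_but_one_letter A))"
    by (simp add: card_lyndon_msets_even_but_one_letter)
  finally show ?thesis by simp
qed

definition composition_mset :: "nat list \<Rightarrow> nat multiset" where
  "composition_mset \<alpha> = (\<Sum>i<length \<alpha>. replicate_mset (\<alpha> ! i) i)"

lemma count_composition_mset:
  "count (composition_mset \<alpha>) j = (if j < length \<alpha> then \<alpha> ! j else 0)"
  by (simp add: composition_mset_def count_sum)

lemma words_has_weight_iff_mset:
  "w \<in> words (length \<alpha>) (sum_list \<alpha>) \<and> has_weight \<alpha> w \<longleftrightarrow> mset w = composition_mset \<alpha>"
proof
  assume w: "w \<in> words (length \<alpha>) (sum_list \<alpha>) \<and> has_weight \<alpha> w"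
  show "mset w = composition_mset \<alpha>"
  proof (rule multiset_eqI)
    fix j
    show "count (mset w) j = count (composition_mset \<alpha>) j"
    proof (cases "j < length \<alpha>")
      case True
      then show ?thesis using w by (simp add: count_composition_mset has_weight_def count_mset)
    next
      case False
      then have "j \<notin> set w" using w by (auto simp: words_def)
      then show ?thesis using False by (simp add: count_composition_mset count_mset_0_iff)
    qed
  qed
next
  assume w: "mset w = composition_mset \<alpha>"
  have "set w \<subseteq> {..<length \<alpha>}"
  proof
    fix x assume "x \<in> set w"
    then have "0 < count (composition_mset \<alpha>) x" by (simp flip: w)
    then show "x \<in> {..<length \<alpha>}" by (simp add: count_composition_mset split: if_splits)
  qed
  moreover have "length w = sum_list \<alpha>"
    using arg_cong[OF w, of size]
    by (simp add: composition_mset_def sum_list_sum_nth atLeast0LessThan)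
  moreover have "has_weight \<alpha> w"
    unfolding has_weight_def
  proof (intro allI impI)
    fix i assume "i < length \<alpha>"
    have "count_list w i = count (mset w) i" by (simp add: count_mset)
    then show "count_list w i = \<alpha> ! i" using \<open>i < length \<alpha>\<close> by (simp add: w count_composition_mset)
  qed
  ultimately show "w \<in> words (length \<alpha>) (sum_list \<alpha>) \<and> has_weight \<alpha> w"
    by (simp add: words_def)
qed

lemma distinct_iff_count_mset_le_1: "distinct xs \<longleftrightarrow> (\<forall>x. count (mset xs) x \<le> 1)"
  by (induction xs) (auto simp: not_in_iff count_eq_zero_iff le_Suc_eq)

lemma words_o_has_weight_eq:
  "{w \<in> words_o (length \<alpha>) (sum_list \<alpha>). has_weight \<alpha> w} =
     {w. mset w = composition_mset \<alpha> \<and> odd_distinct (factor_mset w)}"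
  using words_has_weight_iff_mset[of _ \<alpha>]
  by (auto simp: words_o_def odd_distinct_def factor_mset_def distinct_iff_count_mset_le_1)

lemma words_e_has_weight_eq:
  "{w \<in> words_e (length \<alpha>) (sum_list \<alpha>). has_weight \<alpha> w} =
     {w. mset w = composition_mset \<alpha> \<and> even_but_one_letter (factor_mset w)}"
  using words_has_weight_iff_mset[of _ \<alpha>]
  by (auto simp: words_e_def even_but_one_letter_def factor_mset_def simp flip: mset_filter)

theorem proposition3p2:
  fixes n :: nat and \<alpha> :: "nat list"
  assumes "n \<ge> 1"
    and "\<forall>a\<in>set \<alpha>. a > 0"
    and "sum_list \<alpha> = n"
  shows "card {w \<in> words_o (length \<alpha>) n. has_weight \<alpha> w}
       = card {w \<in> words_e (length \<alpha>) n. has_weight \<alpha> w}"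
proof -
  let ?A = "composition_mset \<alpha>"
  have "card {w \<in> words_o (length \<alpha>) n. has_weight \<alpha> w} =
      card {w. mset w = ?A \<and> odd_distinct (factor_mset w)}"
    using words_o_has_weight_eq[of \<alpha>] assms(3) by simp
  also have "\<dots> = card (lyndon_msets odd_distinct ?A)"
    by (rule bij_betw_same_card[OF bij_betw_factor_mset])
  also have "\<dots> = card (lyndon_msets even_but_one_letter ?A)"
    by (rule card_lyndon_msets_odd_distinct_eq_even_but_one_letter)
  also have "\<dots> = card {w. mset w = ?A \<and> even_but_one_letter (factor_mset w)}"
    by (rule bij_betw_same_card[OF bij_betw_factor_mset, symmetric])
  also have "\<dots> = card {w \<in> words_e (length \<alpha>) n. has_weight \<alpha> w}"
    using words_e_has_weight_eq[of \<alpha>] assms(3) by simp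
  finally show ?thesis .
qed

end
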